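(* Let $n$ and $x$ be positive integers with $x\le n$, let $k\ge 0$, and let $\mathcal M=\{M_1,\dots,M_s\}$ be a collection of perfect matchings of $K_{2n}$ such that each of the $\binom{2n}{2}$ edges of $K_{2n}$ belongs to at most $k$ of the matchings $M_1,\dots,M_s$. Let $$N=\sum_{j=\max(0,\,2x-n)}^{x}\binom{2x}{2j}\frac{(2j)!}{j!\,2^j}.$$ If $$k\le\frac{1}{e\cdot 2x(2n-1)\binom{n-1}{x-1}}\bigl(N-e\bigr),$$ then there exists a perfect matching $M$ of $K_{2n}$ such that $|M\cap M_i|\le x-1$ for every $i\in\{1,\dots,s\}$.
   Context: A perfect matching of $K_{2n}$ is a set of $n$ pairwise vertex-disjoint edges covering all $2n$ vertices; $e$ denotes Euler's number. The quantity $N$ counts the ways to choose a set of $j$ pairwise disjoint pairs from a fixed set of $2x$ vertices (leaving $2x-2j$ unpaired vertices), summed over those $j$ with $j+(2x-2j)\le n$. *)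

theory Defs
  imports "HOL-Analysis.Analysis"
begin

definition K_edges :: "nat \<Rightarrow> nat set set" where
  "K_edges n = {e. \<exists>u v. u < 2*n \<and> v < 2*n \<and> u \<noteq> v \<and> e = {u, v}}"

definition perfect_matching :: "nat \<Rightarrow> nat set set \<Rightarrow> bool" where
  "perfect_matching n M \<longleftrightarrow>
     M \<subseteq> K_edges n \<and>
     (\<forall>e\<in>M. \<forall>f\<in>M. e \<noteq> f \<longrightarrow> e \<inter> f = {}) \<and>
     \<Union>M = {0..<2*n}"

definition N_count :: "nat \<Rightarrow> nat \<Rightarrow> nat" where
  "N_count n x = (\<Sum>j = (2*x - n)..x. ((2*x) choose (2*j)) * (fact (2*j) div (fact j * 2^j)))"

end

theory Submission
  imports Defs
begin

(* A perfect matching M of K_{2n} is "good" if |M \<inter> M_i| < x for every i.  We prove that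
   a good matching exists by a union bound over all (2n-1)!! perfect matchings:
   - a fixed M_i shares at least x edges with at most C(n,x) (2(n-x)-1)!! perfect matchings;
   - double counting edges gives s n <= k |E(K_{2n})| = k n (2n-1), so s <= k (2n-1);
   - N counts partial matchings of 2x points with few unpaired points, and a recurrence
     yields N (2(n-x)-1)!! <= 2x (2n-3)!!;
   - with the hypothesis on k this gives s C(n,x) (2(n-x)-1)!! < (2n-1)!!. *)

(* The odd double factorial (2j-1)!! = 1 * 3 * ... * (2j-1); it counts the perfect
   matchings of 2j points. *)
definition odd_fact :: "nat \<Rightarrow> nat" where
  "odd_fact j = (\<Prod>i<j. 2*i + 1)"

lemma odd_fact_Suc: "odd_fact (Suc j) = odd_fact j * (2*j + 1)"
  by (simp add: odd_fact_def)

lemma odd_fact_pos: "0 < odd_fact j"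
  by (simp add: odd_fact_def)

(* (2j)! = j! 2^j (2j-1)!!, which identifies the summands of N_count. *)
lemma fact_even: "fact (2*j) = (fact j * 2^j * odd_fact j :: nat)"
proof (induction j)
  case 0 then show ?case by (simp add: odd_fact_def)
next
  case (Suc j)
  have "fact (2*Suc j) = (fact (2*j) * ((2*j+1) * (2*j+2)) :: nat)"
    by (simp add: algebra_simps)
  also have "\<dots> = fact (Suc j) * 2^(Suc j) * odd_fact (Suc j)"
    using Suc by (simp add: odd_fact_Suc algebra_simps)
  finally show ?case .
qed

(* Products v (v+2) ... (v+2(y-1)) with step two, the shape of quotients of odd double
   factorials. *)
definition rising2 :: "nat \<Rightarrow> nat \<Rightarrow> nat" where
  "rising2 v y = (\<Prod>i<y. v + 2*i)"

lemma rising2_Suc: "rising2 v (Suc y) = rising2 v y * (v + 2*y)"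
  by (simp add: rising2_def)

lemma rising2_Suc': "rising2 v (Suc y) = v * rising2 (v + 2) y"
  unfolding rising2_def by (subst prod.lessThan_Suc_shift) (simp add: algebra_simps)

lemma odd_fact_add: "odd_fact (m + y) = odd_fact m * rising2 (2*m + 1) y"
  by (induction y) (simp add: rising2_def, simp add: odd_fact_Suc rising2_Suc algebra_simps)

(* pm_term p v j counts the partial matchings of p points with j pairs, provided that they
   leave fewer than v points unpaired. *)
definition pm_term :: "nat \<Rightarrow> nat \<Rightarrow> nat \<Rightarrow> nat" where
  "pm_term p v j = (if p < v + 2*j then (p choose (2*j)) * odd_fact j else 0)"

(* few_unmatched p v counts the partial matchings of p labelled points leaving fewer than v
   points unpaired.  N_count is such a number, and the classical recurrence below (the last
   point is unpaired, or paired with one of the other p points) yields a product bound. *)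
definition few_unmatched :: "nat \<Rightarrow> nat \<Rightarrow> nat" where
  "few_unmatched p v = (\<Sum>j\<le>p. pm_term p v j)"

lemma few_unmatched_extend:
  assumes "p \<le> q" shows "(\<Sum>j\<le>q. pm_term p v j) = few_unmatched p v"
  unfolding few_unmatched_def
  by (rule sum.mono_neutral_right) (use assms in \<open>auto simp: pm_term_def binomial_eq_0\<close>)

lemma few_unmatched_0: "few_unmatched p 0 = 0"
  by (simp add: few_unmatched_def pm_term_def)

lemma few_unmatched_base: "few_unmatched 0 v = (if 0 < v then 1 else 0)"
  by (simp add: few_unmatched_def pm_term_def odd_fact_def)

(* Pascal's rule for the summands, combined with (p+1) C(p,2i) = (2i+1) C(p+1,2i+1). *)
lemma pm_term_Suc:
  "pm_term (Suc p) (Suc v) (Suc i) = pm_term p v (Suc i) + p * pm_term (p - 1) (Suc v) i"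
proof (cases p)
  case 0 then show ?thesis by (simp add: pm_term_def)
next
  case (Suc q)
  have "(Suc q choose Suc (2*i)) * odd_fact (Suc i)
        = ((Suc q choose Suc (2*i)) * Suc (2*i)) * odd_fact i"
    by (simp add: odd_fact_Suc algebra_simps del: binomial_Suc_Suc)
  also have "\<dots> = Suc q * ((q choose (2*i)) * odd_fact i)"
    by (simp only: Suc_times_binomial_eq[symmetric] mult.assoc)
  finally have pascal_odd:
    "(Suc q choose Suc (2*i)) * odd_fact (Suc i) = Suc q * ((q choose (2*i)) * odd_fact i)" .
  have pascal: "(Suc (Suc q) choose (2 * Suc i))
      = (Suc q choose (2 * Suc i)) + (Suc q choose Suc (2*i))"
    by simp
  show ?thesis
    unfolding pm_term_def Suc pascal using pascal_odd
    by (simp add: distrib_right del: binomial_Suc_Suc)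
qed

lemma few_unmatched_rec:
  "few_unmatched (Suc p) (Suc v) = few_unmatched p v + p * few_unmatched (p - 1) (Suc v)"
proof -
  have "few_unmatched (Suc p) (Suc v) = pm_term p v 0 + (\<Sum>i\<le>p. pm_term (Suc p) (Suc v) (Suc i))"
    unfolding few_unmatched_def by (subst sum.atMost_Suc_shift) (simp add: pm_term_def)
  also have "\<dots> = (\<Sum>j\<le>Suc p. pm_term p v j) + p * (\<Sum>i\<le>p. pm_term (p - 1) (Suc v) i)"
  proof -
    have "pm_term p v 0 + (\<Sum>i\<le>p. pm_term p v (Suc i)) = (\<Sum>j\<le>Suc p. pm_term p v j)"
      by (simp only: sum.atMost_Suc_shift[of _ "p"])
    then show ?thesis by (simp add: pm_term_Suc sum.distrib sum_distrib_left)
  qed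
  also have "\<dots> = few_unmatched p v + p * few_unmatched (p - 1) (Suc v)"
    by (simp only: few_unmatched_extend[OF le_SucI[OF order.refl]]
        few_unmatched_extend[OF diff_le_self])
  finally show ?thesis .
qed

lemma few_unmatched_bound:
  "few_unmatched (2*y) v \<le> rising2 v y \<and> few_unmatched (2*y + 1) v \<le> rising2 (v + 1) y"
proof (induction y arbitrary: v)
  case 0
  have "few_unmatched 1 v \<le> 1"
    using few_unmatched_rec[of 0 "v - 1"] by (cases v) (simp_all add: few_unmatched_0 few_unmatched_base)
  then show ?case by (simp add: few_unmatched_base rising2_def)
next
  case (Suc y)
  have even: "few_unmatched (2*Suc y) v \<le> rising2 v (Suc y)" for v
  proof (cases v)
    case 0 then show ?thesis by (simp add: few_unmatched_0)
  next
    case (Suc w)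
    define P where "P = rising2 (Suc w) y"
    have "few_unmatched (Suc (2*y)) w \<le> w * P"
      using Suc.IH[of w] by (cases w) (simp_all add: few_unmatched_0 P_def)
    moreover have "few_unmatched (2*y) (Suc w) \<le> P"
      using Suc.IH[of "Suc w"] by (simp add: P_def)
    ultimately have "few_unmatched (2*Suc y) (Suc w) \<le> w * P + Suc (2*y) * P"
      using few_unmatched_rec[of "Suc (2*y)" w] by (simp add: add_mono)
    also have "\<dots> = rising2 (Suc w) (Suc y)" by (simp add: P_def rising2_Suc algebra_simps)
    finally show ?thesis using Suc by simp
  qed
  have odd: "few_unmatched (2*Suc y + 1) v \<le> rising2 (v + 1) (Suc y)"
  proof (cases v)
    case 0 then show ?thesis by (simp add: few_unmatched_0)
  next
    case (Suc w)
    define R where "R = rising2 (w + 2) y"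
    have "few_unmatched (2*Suc y) w \<le> w * R"
      using even[of w] by (simp add: R_def rising2_Suc')
    moreover have "few_unmatched (2*y + 1) (Suc w) \<le> R"
      using Suc.IH[of "Suc w"] by (simp add: R_def)
    ultimately have "few_unmatched (2*Suc y + 1) (Suc w) \<le> w * R + Suc (Suc (2*y)) * R"
      using few_unmatched_rec[of "Suc (Suc (2*y))" w] by (simp add: add_mono)
    also have "\<dots> = rising2 (Suc w + 1) (Suc y)" by (simp add: R_def rising2_Suc algebra_simps)
    finally show ?thesis using Suc by simp
  qed
  from even odd show ?case by blast
qed

lemma odd_fact_eq_div: "fact (2*j) div (fact j * 2^j) = odd_fact j"
  by (simp add: fact_even)

(* N_count n x counts partial matchings of 2x points leaving at most 2(n-x) points
   unpaired, i.e. fewer than 2(n-x)+1. *)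
lemma N_count_eq_few_unmatched:
  assumes "x \<le> n"
  shows "N_count n x = few_unmatched (2*x) (2*(n - x) + 1)"
proof -
  have "few_unmatched (2*x) (2*(n - x) + 1) = (\<Sum>j\<in>{2*x - n..x}. pm_term (2*x) (2*(n - x) + 1) j)"
    unfolding few_unmatched_def
  proof (rule sum.mono_neutral_right)
    show "\<forall>j\<in>{..2*x} - {2*x - n..x}. pm_term (2*x) (2*(n - x) + 1) j = 0"
      using assms by (auto simp: pm_term_def binomial_eq_0)
  qed auto
  also have "\<dots> = N_count n x"
    unfolding N_count_def using assms by (intro sum.cong) (auto simp: pm_term_def odd_fact_eq_div)
  finally show ?thesis by simp
qed

lemma N_count_bound:
  assumes "0 < x" "x \<le> n"
  shows "N_count n x * odd_fact (n - x) \<le> 2 * x * odd_fact (n - 1)"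
proof -
  obtain y where x: "x = Suc y" using assms(1) by (cases x) auto
  define m where "m = n - x"
  define R where "R = rising2 (2*m + 1) y"
  have "N_count n x = few_unmatched (Suc (Suc (2*y))) (Suc (2*m))"
    using N_count_eq_few_unmatched[OF assms(2)] by (simp add: x m_def)
  also have "\<dots> = few_unmatched (2*y + 1) (2*m) + Suc (2*y) * few_unmatched (2*y) (Suc (2*m))"
    using few_unmatched_rec[of "Suc (2*y)" "2*m"] by simp
  also have "\<dots> \<le> R + Suc (2*y) * R"
    using few_unmatched_bound[of y "2*m"] few_unmatched_bound[of y "Suc (2*m)"]
    by (intro add_mono mult_le_mono2) (simp_all add: R_def)
  finally have "N_count n x \<le> 2 * x * R" by (simp add: x)
  moreover have "odd_fact (n - 1) = odd_fact m * R"
    using odd_fact_add[of m y] assms(2) by (simp add: R_def m_def x)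
  ultimately show ?thesis by (simp add: m_def)
qed

definition matchings :: "'a set \<Rightarrow> 'a set set set" where
  "matchings V = {M. (\<forall>e\<in>M. e \<subseteq> V \<and> card e = 2) \<and>
                     (\<forall>e\<in>M. \<forall>f\<in>M. e \<noteq> f \<longrightarrow> e \<inter> f = {}) \<and> \<Union>M = V}"

lemma matchingsI:
  assumes "\<And>e. e \<in> M \<Longrightarrow> e \<subseteq> V \<and> card e = 2"
    and "\<And>e f. e \<in> M \<Longrightarrow> f \<in> M \<Longrightarrow> e \<noteq> f \<Longrightarrow> e \<inter> f = {}"
    and "\<Union>M = V"
  shows "M \<in> matchings V"
  using assms unfolding matchings_def by blast

lemma matchingsD:
  assumes "M \<in> matchings V"
  shows "\<And>e. e \<in> M \<Longrightarrow> e \<subseteq> V" and "\<And>e. e \<in> M \<Longrightarrow> card e = 2"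
    and "\<And>e f. e \<in> M \<Longrightarrow> f \<in> M \<Longrightarrow> e \<noteq> f \<Longrightarrow> e \<inter> f = {}"
    and "\<Union>M = V"
  using assms unfolding matchings_def by blast+

lemma finite_matchings: "finite V \<Longrightarrow> finite (matchings V)"
  by (rule finite_subset[of _ "Pow (Pow V)"]) (auto simp: matchings_def)

lemma matchings_Diff:
  assumes M: "M \<in> matchings V" and "S \<subseteq> M"
  shows "M - S \<in> matchings (V - \<Union>S)"
proof -
  have disj: "f \<inter> \<Union>S = {}" if "f \<in> M - S" for f
    using matchingsD(3)[OF M, of f] that assms(2) by blast
  show ?thesis
  proof (rule matchingsI)
    show "e \<subseteq> V - \<Union>S \<and> card e = 2" if "e \<in> M - S" for e
      using disj[OF that] matchingsD(1,2)[OF M, of e] that by blast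
    show "\<Union>(M - S) = V - \<Union>S"
      using disj matchingsD(4)[OF M] by blast
  qed (use matchingsD(3)[OF M] in blast)
qed

lemma matchings_insert:
  assumes M: "M \<in> matchings (V - e)" and "e \<subseteq> V" "card e = 2"
  shows "insert e M \<in> matchings V"
proof (rule matchingsI)
  show "f \<subseteq> V \<and> card f = 2" if "f \<in> insert e M" for f
    using that assms matchingsD(1,2)[OF M, of f] by blast
  show "f \<inter> g = {}" if "f \<in> insert e M" "g \<in> insert e M" "f \<noteq> g" for f g
    using that matchingsD(1,3)[OF M] by blast
  show "\<Union>(insert e M) = V" using matchingsD(4)[OF M] assms(2) by blast
qed

lemma matchings_decompose:
  assumes "v \<in> V"
  shows "matchings V = (\<Union>w\<in>V - {v}. insert {v,w} ` matchings (V - {v,w}))"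
proof
  show "matchings V \<subseteq> (\<Union>w\<in>V - {v}. insert {v,w} ` matchings (V - {v,w}))"
  proof
    fix M assume M: "M \<in> matchings V"
    then obtain e where e: "e \<in> M" "v \<in> e" using assms matchingsD(4)[OF M] by blast
    then obtain w where w: "e = {v,w}" "w \<noteq> v"
      using matchingsD(2)[OF M e(1)] by (auto simp: card_2_iff)
    have "M - {e} \<in> matchings (V - e)" using matchings_Diff[OF M, of "{e}"] e by simp
    moreover have "w \<in> V - {v}" using w matchingsD(1)[OF M e(1)] by auto
    moreover have "M = insert e (M - {e})" using e by auto
    ultimately show "M \<in> (\<Union>w\<in>V - {v}. insert {v,w} ` matchings (V - {v,w}))"
      using w by blast
  qed
  show "(\<Union>w\<in>V - {v}. insert {v,w} ` matchings (V - {v,w})) \<subseteq> matchings V"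
  proof
    fix M assume "M \<in> (\<Union>w\<in>V - {v}. insert {v,w} ` matchings (V - {v,w}))"
    then obtain w M' where "w \<in> V - {v}" "M' \<in> matchings (V - {v,w})" "M = insert {v,w} M'"
      by blast
    moreover have "card {v,w} = 2" using \<open>w \<in> V - {v}\<close> by auto
    ultimately show "M \<in> matchings V" using matchings_insert[of M' V "{v,w}"] assms by auto
  qed
qed

lemma card_matchings:
  assumes "finite V" "card V = 2*q"
  shows "card (matchings V) = odd_fact q"
  using assms
proof (induction q arbitrary: V)
  case 0
  then have V: "V = {}" by simp
  have "M = {}" if M: "M \<in> matchings V" for M
  proof -
    have "e \<notin> M" for e
      using matchingsD(1,2)[OF M, of e] V by (auto simp: card_eq_0_iff)
    then show ?thesis by blast
  qed
  moreover have "{} \<in> matchings V" using V by (intro matchingsI) auto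
  ultimately have "matchings V = {{}}" by blast
  then show ?case by (simp add: odd_fact_def)
next
  case (Suc q)
  then have "V \<noteq> {}" by auto
  then obtain v where v: "v \<in> V" by blast
  have card_part: "card (insert {v,w} ` matchings (V - {v,w})) = odd_fact q"
    if w: "w \<in> V - {v}" for w
  proof -
    have not_in: "{v,w} \<notin> M" if "M \<in> matchings (V - {v,w})" for M
      using matchingsD(1)[OF that] by blast
    have "inj_on (insert {v,w}) (matchings (V - {v,w}))"
      by (rule inj_onI) (use not_in in \<open>simp add: insert_ident\<close>)
    moreover have "card (V - {v,w}) = 2*q" using Suc.prems v w by (auto simp: card_Diff_subset)
    ultimately show ?thesis using Suc.IH[of "V - {v,w}"] Suc.prems by (simp add: card_image)
  qed
  have disjoint: "insert {v,w} ` matchings (V - {v,w}) \<inter> insert {v,w'} ` matchings (V - {v,w'}) = {}"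
    if w: "w \<in> V - {v}" and w': "w' \<in> V - {v}" and "w \<noteq> w'" for w w'
  proof (rule ccontr)
    assume "\<not> ?thesis"
    then obtain M where M: "M \<in> insert {v,w} ` matchings (V - {v,w})"
      and M': "M \<in> insert {v,w'} ` matchings (V - {v,w'})" by blast
    have "M \<in> matchings V"
      unfolding matchings_decompose[OF v] using w M by blast
    moreover have "{v,w} \<in> M" using M by auto
    moreover have "{v,w'} \<in> M" using M' by auto
    moreover have "{v,w} \<noteq> {v,w'}" using \<open>w \<noteq> w'\<close> by (auto simp: doubleton_eq_iff)
    ultimately have "{v,w} \<inter> {v,w'} = {}" by (rule matchingsD(3))
    then show False by blast
  qed
  have "card (matchings V) = (\<Sum>w\<in>V - {v}. card (insert {v,w} ` matchings (V - {v,w})))"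
    unfolding matchings_decompose[OF v]
  proof (rule card_UN_disjoint)
    show "finite (V - {v})" using Suc.prems by simp
    show "\<forall>w\<in>V - {v}. finite (insert {v,w} ` matchings (V - {v,w}))"
      using Suc.prems finite_matchings by auto
  qed (intro ballI impI disjoint)
  also have "\<dots> = (2*q + 1) * odd_fact q" using card_part Suc.prems v by simp
  finally show ?case by (simp add: odd_fact_Suc)
qed

lemma card_Union_submatching:
  assumes M: "M \<in> matchings V" and S: "S \<subseteq> M" and fin: "finite V"
  shows "card (\<Union>S) = 2 * card S"
proof -
  have "card (\<Union>S) = (\<Sum>e\<in>S. card e)"
  proof (rule card_Union_disjoint)
    show "pairwise disjnt S"
      unfolding pairwise_def disjnt_def using matchingsD(3)[OF M] S by blast
    show "finite e" if "e \<in> S" for e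
      using matchingsD(1)[OF M, of e] that S fin finite_subset by blast
  qed
  also have "\<dots> = (\<Sum>e\<in>S. 2)"
    using matchingsD(2)[OF M] S by (intro sum.cong) auto
  finally show ?thesis by simp
qed

lemma card_matching:
  assumes "M \<in> matchings V" "finite V"
  shows "card V = 2 * card M"
  using card_Union_submatching[OF assms(1) order.refl assms(2)] matchingsD(4)[OF assms(1)] by simp

lemma card_matchings_containing:
  assumes M0: "M0 \<in> matchings V" and S: "S \<subseteq> M0" and fin: "finite V"
    and cV: "card V = 2*n"
  shows "card {M \<in> matchings V. S \<subseteq> M} \<le> odd_fact (n - card S)"
proof -
  have "card {M \<in> matchings V. S \<subseteq> M} = card ((\<lambda>M. M - S) ` {M \<in> matchings V. S \<subseteq> M})"
    by (rule card_image[symmetric]) (auto intro!: inj_onI)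
  also have "\<dots> \<le> card (matchings (V - \<Union>S))"
    using fin finite_matchings matchings_Diff by (intro card_mono) blast+
  also have "\<dots> = odd_fact (n - card S)"
  proof (rule card_matchings)
    have "\<Union>S \<subseteq> V" using matchingsD(4)[OF M0] S by blast
    then show "card (V - \<Union>S) = 2 * (n - card S)"
      using card_Union_submatching[OF M0 S fin] cV fin by (simp add: card_Diff_subset finite_subset)
  qed (use fin in simp)
  finally show ?thesis .
qed

(* A fixed perfect matching M0 shares at least x edges with at most
   C(n,x) (2(n-x)-1)!! perfect matchings: choose x of its edges and complete them. *)
lemma card_matchings_meeting:
  assumes M0: "M0 \<in> matchings V" and fin: "finite V" and cV: "card V = 2*n"
  shows "card {M \<in> matchings V. x \<le> card (M \<inter> M0)} \<le> (n choose x) * odd_fact (n - x)"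
proof -
  have finM0: "finite M0" using matchingsD(1)[OF M0] fin
    by (meson finite_Pow_iff finite_subset subsetI PowI)
  have cM0: "card M0 = n" using card_matching[OF M0 fin] cV by simp
  let ?I = "{S. S \<subseteq> M0 \<and> card S = x}"
  have "{M \<in> matchings V. x \<le> card (M \<inter> M0)} \<subseteq> (\<Union>S\<in>?I. {M \<in> matchings V. S \<subseteq> M})"
  proof
    fix M assume M: "M \<in> {M \<in> matchings V. x \<le> card (M \<inter> M0)}"
    then obtain S where "S \<subseteq> M \<inter> M0" "card S = x"
      using obtain_subset_with_card_n by blast
    then show "M \<in> (\<Union>S\<in>?I. {M \<in> matchings V. S \<subseteq> M})" using M by blast
  qed
  moreover have "finite (\<Union>S\<in>?I. {M \<in> matchings V. S \<subseteq> M})"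
    by (rule finite_subset[of _ "matchings V"]) (auto simp: finite_matchings fin)
  ultimately have "card {M \<in> matchings V. x \<le> card (M \<inter> M0)}
      \<le> card (\<Union>S\<in>?I. {M \<in> matchings V. S \<subseteq> M})"
    by (simp add: card_mono)
  also have "\<dots> \<le> (\<Sum>S\<in>?I. card {M \<in> matchings V. S \<subseteq> M})"
    using finM0 by (intro card_UN_le) auto
  also have "\<dots> \<le> (\<Sum>S\<in>?I. odd_fact (n - x))"
    using card_matchings_containing[OF M0 _ fin cV] by (intro sum_mono) auto
  also have "\<dots> = (n choose x) * odd_fact (n - x)"
    using n_subsets[OF finM0, of x] cM0 by simp
  finally show ?thesis .
qed

lemma good_matching_exists:
  assumes fin: "finite V" and cV: "card V = 2*n"
    and Ms: "\<forall>i < length Ms. Ms ! i \<in> matchings V"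
    and few: "length Ms * (n choose x) * odd_fact (n - x) < odd_fact n"
  shows "\<exists>M \<in> matchings V. \<forall>i < length Ms. card (M \<inter> Ms ! i) < x"
proof -
  define Bad where "Bad = (\<Union>i<length Ms. {M \<in> matchings V. x \<le> card (M \<inter> Ms ! i)})"
  have "card Bad \<le> (\<Sum>i<length Ms. card {M \<in> matchings V. x \<le> card (M \<inter> Ms ! i)})"
    unfolding Bad_def by (rule card_UN_le) simp
  also have "\<dots> \<le> (\<Sum>i<length Ms. (n choose x) * odd_fact (n - x))"
    using card_matchings_meeting[OF _ fin cV] Ms by (intro sum_mono) simp
  also have "\<dots> < card (matchings V)"
    using few card_matchings[OF fin cV] by simp
  finally have "Bad \<noteq> matchings V" by auto
  moreover have "Bad \<subseteq> matchings V" unfolding Bad_def by blast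
  ultimately have "\<not> matchings V \<subseteq> Bad" by blast
  then show ?thesis unfolding Bad_def by (force simp: not_le)
qed

lemma double_counting_bound:
  fixes As :: "'a set list"
  assumes fin: "finite E" and sub: "\<forall>i < length As. As ! i \<subseteq> E \<and> card (As ! i) = c"
    and deg: "\<forall>e \<in> E. card {i. i < length As \<and> e \<in> As ! i} \<le> k"
  shows "length As * c \<le> k * card E"
proof -
  have "length As * c = (\<Sum>i<length As. card (As ! i))"
    using sub by simp
  also have "\<dots> = (\<Sum>i<length As. \<Sum>e\<in>E. if e \<in> As ! i then 1 else 0)"
    using sub fin by (intro sum.cong) (simp_all add: sum.If_cases Int_absorb1)
  also have "\<dots> = (\<Sum>e\<in>E. \<Sum>i<length As. if e \<in> As ! i then 1 else 0)"
    by (rule sum.swap)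
  also have "\<dots> = (\<Sum>e\<in>E. card {i. i < length As \<and> e \<in> As ! i})"
    by (intro sum.cong) (simp_all add: sum.If_cases Int_def)
  also have "\<dots> \<le> k * card E"
    using deg sum_bounded_above[of E "\<lambda>e. card {i. i < length As \<and> e \<in> As ! i}" k] by (simp add: mult.commute)
  finally show ?thesis .
qed

(* The hypothesis on k, together with s <= k (2n-1) and the estimate on N, makes the
   union bound applicable (d stands for (2(n-x)-1)!!, F for (2n-3)!!).  The argument uses
   x C(n,x) = n C(n-1,x-1) and e >= 2. *)
lemma threshold_arith:
  fixes n x k s d F :: nat and N :: real
  assumes x: "0 < x" "x \<le> n"
    and s: "s \<le> k * (2*n - 1)"
    and k: "real k \<le> (N - exp 1) /
           (exp 1 * (2 * real x) * (2 * real n - 1) * real ((n - 1) choose (x - 1)))"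
    and N: "N * real d \<le> 2 * real x * real F" and d: "0 < d"
  shows "s * (n choose x) * d < (2*n - 1) * F"
proof -
  define c where "c = real ((n - 1) choose (x - 1))"
  define D where "D = exp 1 * (2 * real x) * (2 * real n - 1) * c"
  define a where "a = real (s * (n choose x) * d)"
  have e: "exp 1 \<ge> (2::real)" using exp_ge_add_one_self[of 1] by simp
  have xn: "real x \<ge> 1" "real n \<ge> 1" using x by auto
  have c: "c \<ge> 1" using x by (simp add: c_def Suc_le_eq)
  have "x * (n choose x) = n * ((n - 1) choose (x - 1))"
  proof -
    obtain n' x' where "n = Suc n'" "x = Suc x'" using x by (cases n; cases x) auto
    then show ?thesis using Suc_times_binomial_eq[of n' x'] by (simp only: diff_Suc_1 mult.commute)
  qed
  then have absorb: "real x * real (n choose x) = real n * c"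
    unfolding c_def by (simp flip: of_nat_mult)
  have two_n: "real (2*n - 1) = 2 * real n - 1" using x by (simp add: of_nat_diff)
  have "D > 0" unfolding D_def using e c xn by (intro mult_pos_pos) auto
  moreover have "real k \<le> (N - exp 1) / D" using k by (simp only: D_def c_def)
  ultimately have kD: "real k * D \<le> N - exp 1" by (simp add: pos_le_divide_eq)
  have "real s \<le> real (k * (2*n - 1))" using s by (simp only: of_nat_le_iff)
  then have s_real: "real s \<le> real k * (2 * real n - 1)" unfolding of_nat_mult two_n .
  have "(exp 1 * real x * a) * (2 * real x) = 2 * exp 1 * real x * c * real n * real s * real d"
    using absorb by (simp add: a_def algebra_simps)
  also have "\<dots> \<le> 2 * exp 1 * real x * c * real n * (real k * (2 * real n - 1)) * real d"
    using s_real e xn c by (intro mult_right_mono mult_left_mono) auto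
  also have "\<dots> = real n * (real k * D) * real d" by (simp add: D_def algebra_simps)
  also have "\<dots> \<le> real n * (N - exp 1) * real d"
    using kD xn by (intro mult_right_mono mult_left_mono) auto
  also have "\<dots> < real n * (N * real d)"
    using xn d by (simp add: algebra_simps)
  also have "\<dots> \<le> real n * (2 * real x * real F)"
    using N xn by (intro mult_left_mono) auto
  also have "\<dots> = (real n * real F) * (2 * real x)" by (simp only: mult_ac)
  finally have "exp 1 * real x * a < real n * real F"
    by (rule mult_right_less_imp_less) (use xn in simp)
  also have "\<dots> \<le> exp 1 * real x * (2 * real n - 1) * real F"
  proof (rule mult_right_mono)
    have ex: "1 \<le> exp 1 * real x" using mult_mono[of 1 "exp 1" 1 "real x"] e xn by simp
    have "real n \<le> 1 * (2 * real n - 1)" using xn by simp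
    also have "\<dots> \<le> exp 1 * real x * (2 * real n - 1)"
      using ex xn by (intro mult_right_mono) auto
    finally show "real n \<le> exp 1 * real x * (2 * real n - 1)" .
  qed simp
  also have "\<dots> = (exp 1 * real x) * ((2 * real n - 1) * real F)" by (simp only: mult_ac)
  finally have "a < (2 * real n - 1) * real F"
    by (rule mult_left_less_imp_less) (use e xn in simp)
  then have "real (s * (n choose x) * d) < real ((2*n - 1) * F)"
    unfolding a_def of_nat_mult two_n .
  then show ?thesis by (simp only: of_nat_less_iff)
qed

lemma K_edges_eq: "K_edges n = {e. e \<subseteq> {0..<2*n} \<and> card e = 2}"
  unfolding K_edges_def by (auto simp: card_2_iff) metis

lemma finite_K_edges: "finite (K_edges n)"
  unfolding K_edges_eq by (rule finite_subset[of _ "Pow {0..<2*n}"]) auto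

lemma card_K_edges: "card (K_edges n) = n * (2*n - 1)"
proof -
  have "card (K_edges n) = (2*n) choose 2"
    unfolding K_edges_eq using n_subsets[of "{0..<2*n}" 2] by simp
  also have "\<dots> = n * (2*n - 1)" by (simp add: choose_two)
  finally show ?thesis .
qed

lemma perfect_matching_iff: "perfect_matching n M \<longleftrightarrow> M \<in> matchings {0..<2*n}"
  unfolding perfect_matching_def matchings_def K_edges_eq by auto

lemma perfect_matching_edges:
  assumes "perfect_matching n M"
  shows "M \<subseteq> K_edges n" and "card M = n"
proof -
  show "M \<subseteq> K_edges n" using assms by (simp add: perfect_matching_def)
  show "card M = n"
    using card_matching[of M "{0..<2*n}"] assms by (simp add: perfect_matching_iff)
qed

theorem theorem3:
  fixes n x k :: nat and Ms :: "nat set set list"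
  assumes "0 < x" and "x \<le> n"
    and "\<forall>i < length Ms. perfect_matching n (Ms ! i)"
    and "\<forall>e \<in> K_edges n. card {i. i < length Ms \<and> e \<in> Ms ! i} \<le> k"
    and "real k \<le> (real (N_count n x) - exp 1) /
           (exp 1 * (2 * real x) * (2 * real n - 1) * real ((n - 1) choose (x - 1)))"
  shows "\<exists>M. perfect_matching n M \<and> (\<forall>i < length Ms. card (M \<inter> Ms ! i) \<le> x - 1)"
proof -
  have "length Ms * n \<le> k * card (K_edges n)"
  proof (rule double_counting_bound[OF finite_K_edges _ assms(4)])
    show "\<forall>i < length Ms. Ms ! i \<subseteq> K_edges n \<and> card (Ms ! i) = n"
      using assms(3) perfect_matching_edges by blast
  qed
  then have few_Ms: "length Ms \<le> k * (2*n - 1)"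
    using assms(1,2) by (simp add: card_K_edges mult.left_commute[of k n])
  have "real (N_count n x * odd_fact (n - x)) \<le> real (2 * x * odd_fact (n - 1))"
    using N_count_bound[OF assms(1,2)] by (simp only: of_nat_le_iff)
  then have "length Ms * (n choose x) * odd_fact (n - x) < (2*n - 1) * odd_fact (n - 1)"
    using threshold_arith[OF assms(1,2) few_Ms assms(5)] odd_fact_pos by simp
  also have "\<dots> = odd_fact n"
    using assms(1,2) by (cases n) (simp_all add: odd_fact_Suc)
  finally obtain M where "M \<in> matchings {0..<2*n}" "\<forall>i < length Ms. card (M \<inter> Ms ! i) < x"
    using good_matching_exists[of "{0..<2*n}" n Ms x] assms(3) by (auto simp: perfect_matching_iff)
  then show ?thesis
    by (metis Suc_pred' assms(1) less_Suc_eq_le perfect_matching_iff)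
qed

end
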